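(* Let $\mu$ be a Borel probability measure on $\mathbb{R}^n$ which is spectral with spectrum $\Lambda$, let $(U_\Lambda(a))_{a\in\mathbb{R}^n}$ be the group of local translations on $L^2(\mu)$, and let $W:L^2(\mu)\to L^2(G,\mu_{Bohr})$ be the isometry determined by $We_\lambda=\tilde e_\lambda$ for $\lambda\in\Lambda$. Then $\mathcal{U}_{Bohr}(a)W=WU_\Lambda(a)$ for all $a\in\mathbb{R}^n$.
   Context: $e_\lambda(x)=e^{2\pi i\lambda\cdot x}$. $\mu$ is spectral with spectrum $\Lambda$ if $\{e_\lambda\}_{\lambda\in\Lambda}$ is an orthogonal (hence orthonormal) basis of $L^2(\mu)$. The local translations are $U_\Lambda(a)f=\sum_{\lambda\in\Lambda}e^{2\pi ia\cdot\lambda}\langle f,e_\lambda\rangle e_\lambda$, where $\langle f,g\rangle=\int f\overline g\,d\mu$. The Bohr compactification $G$ is the set of all group homomorphisms $\chi:\mathbb{R}^n\to\mathbb{T}$ with pointwise multiplication and the topology of pointwise convergence, a compact abelian group with normalized Haar measure $\mu_{Bohr}$; $\tilde e_\lambda(\chi)=\chi(\lambda)$. For $a\in\mathbb{R}^n$, $(a\cdot\chi)(x)=e^{2\pi ia\cdot x}\chi(x)$ and $(\mathcal{U}_{Bohr}(a)f)(\chi)=f(a\cdot\chi)$ for $f\in L^2(G,\mu_{Bohr})$. *)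

theory Defs
  imports "HOL-Analysis.Analysis" "HOL-Probability.Probability"
begin

definition expo :: "real^'n \<Rightarrow> real^'n \<Rightarrow> complex" where
  "expo l x = exp (2 * complex_of_real pi * \<i> * complex_of_real (l \<bullet> x))"

text \<open>Square integrable (measurable) functions, i.e. representatives of L^2(M).\<close>
definition sq_int :: "'a measure \<Rightarrow> ('a \<Rightarrow> complex) \<Rightarrow> bool" where
  "sq_int M f \<longleftrightarrow> f \<in> borel_measurable M \<and> integrable M (\<lambda>x. (cmod (f x))^2)"

definition l2_inner :: "'a measure \<Rightarrow> ('a \<Rightarrow> complex) \<Rightarrow> ('a \<Rightarrow> complex) \<Rightarrow> complex" where
  "l2_inner M f g = (LINT x|M. f x * cnj (g x))"

text \<open>Unconditional convergence in L^2(M) of the family (h i), i in I, to g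
  (limit of partial sums over the net of finite subsets of I).\<close>
definition l2_has_sum :: "'a measure \<Rightarrow> ('i \<Rightarrow> 'a \<Rightarrow> complex) \<Rightarrow> 'i set \<Rightarrow> ('a \<Rightarrow> complex) \<Rightarrow> bool" where
  "l2_has_sum M h I g \<longleftrightarrow>
     ((\<lambda>S. LINT x|M. (cmod (g x - (\<Sum>i\<in>S. h i x)))^2) \<longlongrightarrow> 0) (finite_subsets_at_top I)"

text \<open>mu is spectral with spectrum Lambda: {e_lambda} is an orthonormal basis of L^2(mu)
  (orthonormal, and complete: only the zero class is orthogonal to all e_lambda).\<close>
definition spectral :: "(real^'n) measure \<Rightarrow> (real^'n) set \<Rightarrow> bool" where
  "spectral \<mu> \<Lambda> \<longleftrightarrow>
     (\<forall>l\<in>\<Lambda>. \<forall>l'\<in>\<Lambda>. l2_inner \<mu> (expo l) (expo l') = (if l = l' then 1 else 0)) \<and>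
     (\<forall>f. sq_int \<mu> f \<and> (\<forall>l\<in>\<Lambda>. l2_inner \<mu> f (expo l) = 0) \<longrightarrow> (AE x in \<mu>. f x = 0))"

definition local_transl :: "(real^'n) measure \<Rightarrow> (real^'n) set \<Rightarrow> real^'n
     \<Rightarrow> (real^'n \<Rightarrow> complex) \<Rightarrow> (real^'n \<Rightarrow> complex) \<Rightarrow> bool" where
  "local_transl \<mu> \<Lambda> a f g \<longleftrightarrow>
     l2_has_sum \<mu> (\<lambda>l x. expo l a * l2_inner \<mu> f (expo l) * expo l x) \<Lambda> g"

text \<open>Bohr compactification: group homomorphisms R^n -> T (T the unit circle in C),
  as a subset of the function space with the product (= pointwise convergence) topology.\<close>
definition bohr_group :: "(real^'n \<Rightarrow> complex) set" where
  "bohr_group = {h. (\<forall>x. cmod (h x) = 1) \<and> (\<forall>x y. h (x + y) = h x * h y)}"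

definition bohr_act :: "real^'n \<Rightarrow> (real^'n \<Rightarrow> complex) \<Rightarrow> (real^'n \<Rightarrow> complex)" where
  "bohr_act a h = (\<lambda>x. expo a x * h x)"

text \<open>M is the normalized Haar measure on G: a translation invariant Radon (regular)
  probability measure on the Borel sets of G.\<close>
definition bohr_haar :: "(real^'n \<Rightarrow> complex) measure \<Rightarrow> bool" where
  "bohr_haar M \<longleftrightarrow>
     space M = bohr_group \<and>
     sets M = sets (restrict_space borel bohr_group) \<and>
     prob_space M \<and>
     (\<forall>h0\<in>bohr_group. \<forall>A\<in>sets M.
        (\<lambda>h x. h0 x * h x) -` A \<inter> bohr_group \<in> sets M \<and>
        emeasure M ((\<lambda>h x. h0 x * h x) -` A \<inter> bohr_group) = emeasure M A) \<and>
     (\<forall>A\<in>sets M. emeasure M A =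
        (INF V\<in>{V. open V \<and> A \<subseteq> V}. emeasure M (V \<inter> bohr_group))) \<and>
     (\<forall>V. open V \<longrightarrow> emeasure M (V \<inter> bohr_group) =
        (SUP K\<in>{K. compact K \<and> K \<subseteq> V \<inter> bohr_group}. emeasure M K))"

end

theory Submission
  imports Defs
begin

text \<open>
  Write \<open>c\<^sub>\<lambda> = \<langle>f, e\<^sub>\<lambda>\<rangle>\<close> and \<open>f\<^sub>S\<close>, \<open>g\<^sub>S\<close> for the partial sums of
  \<open>\<Sum> c\<^sub>\<lambda> e\<^sub>\<lambda>\<close> and \<open>\<Sum> e\<^sub>\<lambda>(a) c\<^sub>\<lambda> e\<^sub>\<lambda>\<close> over a finite \<open>S \<subseteq> \<Lambda>\<close>.
  Since \<open>(a\<cdot>\<chi>)(\<lambda>) = e\<^sub>\<lambda>(a) \<chi>(\<lambda>)\<close>, the identity holds exactly on partial sums: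
  \<open>(W f\<^sub>S)(a\<cdot>\<chi>) = (W g\<^sub>S)(\<chi>)\<close>. Translation invariance of Haar measure and the
  isometry property then give
  \<open>\<parallel>W f (a\<cdot>_) - W g\<parallel>\<^sup>2 \<le> 2\<parallel>f - f\<^sub>S\<parallel>\<^sup>2 + 2\<parallel>g - g\<^sub>S\<parallel>\<^sup>2\<close>, and both terms tend to \<open>0\<close>:
  the second by definition of \<open>U\<^sub>\<Lambda>(a)\<close>, the first by Parseval's identity for the
  orthonormal basis \<open>(e\<^sub>\<lambda>)\<close>. Parseval in turn rests on a Riesz--Fischer argument:
  a fast \<open>L\<^sup>2\<close>-Cauchy sequence of partial sums converges almost everywhere and, by
  Fatou's lemma, in \<open>L\<^sup>2\<close>; completeness of \<open>(e\<^sub>\<lambda>)\<close> identifies its limit with \<open>f\<close>.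
\<close>

section \<open>Square-integrable functions\<close>

lemma borel_measurable_cnj [measurable (raw)]:
  "f \<in> borel_measurable M \<Longrightarrow> (\<lambda>x. cnj (f x)) \<in> borel_measurable M"
  by (rule borel_measurable_continuous_on) (auto intro: continuous_intros)

lemma power2_sum_le: "((x::real) + y)\<^sup>2 \<le> 2 * x\<^sup>2 + 2 * y\<^sup>2"
  using sum_squares_bound[of x y] by (simp add: power2_sum)

lemma norm_add_power2_le:
  fixes u v :: "'a::real_normed_vector"
  shows "(norm (u + v))\<^sup>2 \<le> 2 * (norm u)\<^sup>2 + 2 * (norm v)\<^sup>2"
proof -
  have "(norm (u + v))\<^sup>2 \<le> (norm u + norm v)\<^sup>2"
    by (simp add: norm_triangle_ineq power_mono)
  also have "\<dots> \<le> 2 * (norm u)\<^sup>2 + 2 * (norm v)\<^sup>2" by (rule power2_sum_le)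
  finally show ?thesis .
qed

lemma sq_int_zero: "sq_int M (\<lambda>x. 0)"
  by (simp add: sq_int_def)

lemma sq_int_add_scaled:
  assumes u: "sq_int M u" and v: "sq_int M v"
  shows "sq_int M (\<lambda>x. u x + c * v x)"
proof -
  have [measurable]: "u \<in> borel_measurable M" "v \<in> borel_measurable M"
    using u v by (auto simp: sq_int_def)
  have "integrable M (\<lambda>x. 2 * (cmod (u x))\<^sup>2 + 2 * (cmod (c * v x))\<^sup>2)"
    using u v by (auto simp: sq_int_def norm_mult power_mult_distrib)
  then have "integrable M (\<lambda>x. (cmod (u x + c * v x))\<^sup>2)"
    by (rule Bochner_Integration.integrable_bound) (auto intro!: always_eventually norm_add_power2_le)
  then show ?thesis by (simp add: sq_int_def)
qed

lemma sq_int_diff: "sq_int M u \<Longrightarrow> sq_int M v \<Longrightarrow> sq_int M (\<lambda>x. u x - v x)"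
  using sq_int_add_scaled[of M u v "-1"] by simp

lemma sq_int_add: "sq_int M u \<Longrightarrow> sq_int M v \<Longrightarrow> sq_int M (\<lambda>x. u x + v x)"
  using sq_int_add_scaled[of M u v 1] by simp

lemma sq_int_sum:
  assumes "\<And>i. i \<in> A \<Longrightarrow> sq_int M (e i)"
  shows "sq_int M (\<lambda>x. \<Sum>i\<in>A. d i * e i x)"
  using assms
proof (induction A rule: infinite_finite_induct)
  case (insert i A)
  then have "sq_int M (\<lambda>x. (\<Sum>i\<in>A. d i * e i x) + d i * e i x)"
    by (intro sq_int_add_scaled) auto
  with insert show ?case by (simp add: add.commute)
qed (auto simp: sq_int_zero)

lemma integrable_mult_cnj:
  assumes u: "sq_int M u" and v: "sq_int M v"
  shows "integrable M (\<lambda>x. u x * cnj (v x))"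
proof -
  have [measurable]: "u \<in> borel_measurable M" "v \<in> borel_measurable M"
    using u v by (auto simp: sq_int_def)
  have int: "integrable M (\<lambda>x. (cmod (u x))\<^sup>2 + (cmod (v x))\<^sup>2)"
    using u v by (auto simp: sq_int_def)
  have bound: "cmod (u x * cnj (v x)) \<le> (cmod (u x))\<^sup>2 + (cmod (v x))\<^sup>2" for x
  proof -
    have "0 \<le> cmod (u x) * cmod (v x)" by simp
    then show ?thesis
      using sum_squares_bound[of "cmod (u x)" "cmod (v x)"] by (simp add: norm_mult del: norm_ge_zero)
  qed
  show ?thesis
    by (rule Bochner_Integration.integrable_bound[OF int]) (use bound in \<open>auto intro!: always_eventually\<close>)
qed

lemma l2_inner_add_scaled:
  assumes "sq_int M u" "sq_int M v" "sq_int M w"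
  shows "l2_inner M (\<lambda>x. u x + c * v x) w = l2_inner M u w + c * l2_inner M v w"
proof -
  have "l2_inner M (\<lambda>x. u x + c * v x) w = (LINT x|M. u x * cnj (w x) + c * (v x * cnj (w x)))"
    unfolding l2_inner_def by (simp add: algebra_simps)
  also have "\<dots> = l2_inner M u w + c * l2_inner M v w"
    unfolding l2_inner_def using integrable_mult_cnj[OF assms(1,3)] integrable_mult_cnj[OF assms(2,3)]
    by simp
  finally show ?thesis .
qed

lemma l2_inner_commute: "l2_inner M v u = cnj (l2_inner M u v)"
  unfolding l2_inner_def by (simp add: mult.commute Bochner_Integration.integral_cnj[symmetric])

lemma l2_inner_sum_left:
  assumes "\<And>i. i \<in> A \<Longrightarrow> sq_int M (e i)" "sq_int M w"
  shows "l2_inner M (\<lambda>x. \<Sum>i\<in>A. d i * e i x) w = (\<Sum>i\<in>A. d i * l2_inner M (e i) w)"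
  using assms
proof (induction A rule: infinite_finite_induct)
  case (insert i A)
  have "l2_inner M (\<lambda>x. (\<Sum>i\<in>A. d i * e i x) + d i * e i x) w
      = l2_inner M (\<lambda>x. \<Sum>i\<in>A. d i * e i x) w + d i * l2_inner M (e i) w"
    using insert.prems by (intro l2_inner_add_scaled sq_int_sum) auto
  with insert show ?case by (simp add: add.commute)
qed (auto simp: l2_inner_def)

lemma l2_inner_self: "complex_of_real (LINT x|M. (cmod (u x))\<^sup>2) = l2_inner M u u"
proof -
  have "(\<lambda>x. u x * cnj (u x)) = (\<lambda>x. complex_of_real ((cmod (u x))\<^sup>2))"
    by (simp only: complex_norm_square)
  then show ?thesis unfolding l2_inner_def by (simp only: integral_complex_of_real)
qed

lemma l2_norm_diff_expand:
  assumes u: "sq_int M u" and v: "sq_int M v"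
  shows "(LINT x|M. (cmod (u x - v x))\<^sup>2)
       = (LINT x|M. (cmod (u x))\<^sup>2) + (LINT x|M. (cmod (v x))\<^sup>2) - 2 * Re (l2_inner M u v)"
proof -
  define r where "r x = Re (u x * cnj (v x))" for x
  have "(cmod (u x - v x))\<^sup>2 = (cmod (u x))\<^sup>2 + (cmod (v x))\<^sup>2 - 2 * r x" for x
    unfolding cmod_power2 r_def by (simp add: algebra_simps power2_eq_square)
  moreover have "Re (l2_inner M u v) = (LINT x|M. r x)"
    unfolding l2_inner_def r_def by (rule integral_Re[symmetric]) (rule integrable_mult_cnj[OF u v])
  moreover have "integrable M r"
    unfolding r_def by (rule integrable_Re[OF integrable_mult_cnj[OF u v]])
  ultimately show ?thesis
    using u v by (simp add: sq_int_def)
qed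

lemma l2_norm_diff_le:
  assumes u: "sq_int M u" and v: "sq_int M v"
  shows "(LINT x|M. (cmod (u x - v x))\<^sup>2) \<le> 2 * (LINT x|M. (cmod (u x))\<^sup>2) + 2 * (LINT x|M. (cmod (v x))\<^sup>2)"
proof -
  have iu: "integrable M (\<lambda>x. (cmod (u x))\<^sup>2)" and iv: "integrable M (\<lambda>x. (cmod (v x))\<^sup>2)"
    using u v by (simp_all add: sq_int_def)
  have "(LINT x|M. (cmod (u x - v x))\<^sup>2) \<le> (LINT x|M. 2 * (cmod (u x))\<^sup>2 + 2 * (cmod (v x))\<^sup>2)"
  proof (rule integral_mono)
    show "integrable M (\<lambda>x. (cmod (u x - v x))\<^sup>2)"
      using sq_int_diff[OF u v] by (simp add: sq_int_def)
    show "integrable M (\<lambda>x. 2 * (cmod (u x))\<^sup>2 + 2 * (cmod (v x))\<^sup>2)"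
      using iu iv by simp
    show "(cmod (u x - v x))\<^sup>2 \<le> 2 * (cmod (u x))\<^sup>2 + 2 * (cmod (v x))\<^sup>2" for x
      using norm_add_power2_le[of "u x" "- v x"] by simp
  qed
  also have "\<dots> = 2 * (LINT x|M. (cmod (u x))\<^sup>2) + 2 * (LINT x|M. (cmod (v x))\<^sup>2)"
    using iu iv by simp
  finally show ?thesis .
qed

lemma AE_zero_if_l2_norm_zero:
  assumes "sq_int M u" "(LINT x|M. (cmod (u x))\<^sup>2) = 0"
  shows "AE x in M. u x = 0"
proof -
  have "AE x in M. (cmod (u x))\<^sup>2 = 0"
    using assms by (subst integral_nonneg_eq_0_iff_AE[symmetric]) (auto simp: sq_int_def)
  then show ?thesis by simp
qed

section \<open>Orthonormal bases and Parseval's identity\<close>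

locale l2_orthonormal =
  fixes M :: "'a measure" and e :: "'i \<Rightarrow> 'a \<Rightarrow> complex" and L :: "'i set"
  assumes sq_int_basis: "\<And>l. l \<in> L \<Longrightarrow> sq_int M (e l)"
    and l2_inner_basis: "\<And>l l'. l \<in> L \<Longrightarrow> l' \<in> L \<Longrightarrow> l2_inner M (e l) (e l') = (if l = l' then 1 else 0)"
begin

lemma l2_inner_finite_sum_basis:
  assumes "finite A" "A \<subseteq> L" "m \<in> L"
  shows "l2_inner M (\<lambda>x. \<Sum>l\<in>A. d l * e l x) (e m) = (if m \<in> A then d m else 0)"
proof -
  have "l2_inner M (\<lambda>x. \<Sum>l\<in>A. d l * e l x) (e m) = (\<Sum>l\<in>A. d l * l2_inner M (e l) (e m))"
    using assms sq_int_basis by (intro l2_inner_sum_left) auto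
  also have "\<dots> = (\<Sum>l\<in>A. if l = m then d l else 0)"
    using assms l2_inner_basis by (intro sum.cong) auto
  also have "\<dots> = (if m \<in> A then d m else 0)"
    using assms(1) by (simp add: sum.delta')
  finally show ?thesis .
qed

lemma sq_int_finite_sum_basis: "A \<subseteq> L \<Longrightarrow> sq_int M (\<lambda>x. \<Sum>l\<in>A. d l * e l x)"
  using sq_int_basis by (intro sq_int_sum) auto

lemma l2_norm_finite_sum_basis:
  assumes "finite A" "A \<subseteq> L"
  shows "(LINT x|M. (cmod (\<Sum>l\<in>A. d l * e l x))\<^sup>2) = (\<Sum>l\<in>A. (cmod (d l))\<^sup>2)"
proof -
  let ?F = "\<lambda>x. \<Sum>l\<in>A. d l * e l x"
  have "complex_of_real (LINT x|M. (cmod (?F x))\<^sup>2) = l2_inner M ?F ?F"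
    by (rule l2_inner_self)
  also have "\<dots> = (\<Sum>l\<in>A. d l * l2_inner M (e l) ?F)"
    using assms sq_int_basis sq_int_finite_sum_basis by (intro l2_inner_sum_left) auto
  also have "\<dots> = (\<Sum>l\<in>A. d l * cnj (d l))"
    using assms l2_inner_finite_sum_basis
    by (intro sum.cong) (auto simp: l2_inner_commute[of M "e _"] subsetD)
  also have "\<dots> = complex_of_real (\<Sum>l\<in>A. (cmod (d l))\<^sup>2)"
    by (simp only: of_real_sum complex_norm_square)
  finally show ?thesis by (simp only: of_real_eq_iff)
qed

lemma l2_norm_fourier_remainder:
  assumes f: "sq_int M f" and "finite A" "A \<subseteq> L"
  shows "(LINT x|M. (cmod (f x - (\<Sum>l\<in>A. l2_inner M f (e l) * e l x)))\<^sup>2)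
       = (LINT x|M. (cmod (f x))\<^sup>2) - (\<Sum>l\<in>A. (cmod (l2_inner M f (e l)))\<^sup>2)"
proof -
  define c where "c l = l2_inner M f (e l)" for l
  let ?F = "\<lambda>x. \<Sum>l\<in>A. c l * e l x"
  have "l2_inner M ?F f = (\<Sum>l\<in>A. c l * l2_inner M (e l) f)"
    using assms sq_int_basis by (intro l2_inner_sum_left) auto
  also have "\<dots> = (\<Sum>l\<in>A. c l * cnj (c l))"
    by (simp add: c_def l2_inner_commute[of M f "e _"])
  also have "\<dots> = complex_of_real (\<Sum>l\<in>A. (cmod (c l))\<^sup>2)"
    by (simp only: of_real_sum complex_norm_square)
  finally have "Re (l2_inner M f ?F) = (\<Sum>l\<in>A. (cmod (c l))\<^sup>2)"
    by (simp add: l2_inner_commute[of M f])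
  moreover have "(LINT x|M. (cmod (?F x))\<^sup>2) = (\<Sum>l\<in>A. (cmod (c l))\<^sup>2)"
    by (rule l2_norm_finite_sum_basis[OF assms(2,3)])
  ultimately show ?thesis
    using l2_norm_diff_expand[OF f sq_int_finite_sum_basis[OF assms(3)]] by (simp add: c_def)
qed

end

lemma (in prob_space) integrable_norm_sq_int:
  "sq_int M w \<Longrightarrow> integrable M (\<lambda>x. cmod (w x))"
  by (rule square_integrable_imp_integrable) (auto simp: sq_int_def)

lemma (in prob_space) integral_norm_le_sqrt_l2:
  assumes w: "sq_int M w"
  shows "(LINT x|M. cmod (w x)) \<le> sqrt (LINT x|M. (cmod (w x))\<^sup>2)"
proof -
  have "0 \<le> variance (\<lambda>x. cmod (w x))"
    by (rule variance_positive)
  also have "variance (\<lambda>x. cmod (w x)) = (LINT x|M. (cmod (w x))\<^sup>2) - (LINT x|M. cmod (w x))\<^sup>2"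
    using integrable_norm_sq_int[OF w] w by (intro variance_eq) (auto simp: sq_int_def)
  finally have "(LINT x|M. cmod (w x))\<^sup>2 \<le> (LINT x|M. (cmod (w x))\<^sup>2)"
    by simp
  then show ?thesis by (simp add: real_le_rsqrt)
qed

lemma (in prob_space) l2_inner_unimodular_le:
  assumes w: "sq_int M w" and u: "\<And>x. cmod (u x) = 1"
  shows "cmod (l2_inner M w u) \<le> sqrt (LINT x|M. (cmod (w x))\<^sup>2)"
proof -
  have "cmod (l2_inner M w u) \<le> (LINT x|M. cmod (w x * cnj (u x)))"
    unfolding l2_inner_def by (rule integral_norm_bound)
  also have "\<dots> = (LINT x|M. cmod (w x))" by (simp add: norm_mult u)
  also have "\<dots> \<le> sqrt (LINT x|M. (cmod (w x))\<^sup>2)" by (rule integral_norm_le_sqrt_l2[OF w])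
  finally show ?thesis .
qed

lemma AE_summable_if_integral_norm_summable:
  fixes d :: "nat \<Rightarrow> 'a \<Rightarrow> 'b::{banach, second_countable_topology}"
  assumes [measurable]: "\<And>k. d k \<in> borel_measurable M"
    and int: "\<And>k. integrable M (\<lambda>x. norm (d k x))"
    and bound: "\<And>k. (LINT x|M. norm (d k x)) \<le> b k" and b: "summable b"
  shows "AE x in M. summable (\<lambda>k. d k x)"
proof -
  have "(\<integral>\<^sup>+ x. (\<Sum>k. ennreal (norm (d k x))) \<partial>M) = (\<Sum>k. \<integral>\<^sup>+ x. ennreal (norm (d k x)) \<partial>M)"
    by (rule nn_integral_suminf) measurable
  also have "\<dots> = (\<Sum>k. ennreal (LINT x|M. norm (d k x)))"
    using int by (simp add: nn_integral_eq_integral)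
  also have "\<dots> \<le> (\<Sum>k. ennreal (b k))"
    by (rule suminf_le) (use bound in \<open>auto intro: ennreal_leI\<close>)
  also have "\<dots> < \<infinity>"
  proof -
    have "0 \<le> (LINT x|M. norm (d k x))" for k
      by simp
    then have "0 \<le> b k" for k
      using bound[of k] by (rule order.trans)
    then have "(\<Sum>k. ennreal (b k)) \<noteq> \<top>"
      by (intro ennreal_suminf_neq_top b)
    then show ?thesis
      unfolding infinity_ennreal_def by (rule less_top[THEN iffD1])
  qed
  finally have "AE x in M. (\<Sum>k. ennreal (norm (d k x))) \<noteq> \<infinity>"
    by (intro nn_integral_PInf_AE) measurable
  then show ?thesis
    by eventually_elim (intro summable_norm_cancel[OF summable_suminf_not_top], auto)
qed

text \<open>On a probability space the \<open>L\<^sup>1\<close> norm is bounded by the \<open>L\<^sup>2\<close> norm, so the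
  increments of such a sequence have summable \<open>L\<^sup>1\<close> norms.\<close>

lemma (in prob_space) AE_convergent_fast_l2_cauchy:
  assumes s: "\<And>k. sq_int M (s k)"
    and fast: "\<And>k. (LINT x|M. (cmod (s (Suc k) x - s k x))\<^sup>2) \<le> (1/4)^k"
  shows "AE x in M. convergent (\<lambda>k. s k x)"
proof -
  define d where "d k x = s (Suc k) x - s k x" for k x
  have d: "sq_int M (d k)" for k
    unfolding d_def by (rule sq_int_diff[OF s s])
  have "(LINT x|M. cmod (d k x)) \<le> (1/2)^k" for k
  proof -
    have "(LINT x|M. cmod (d k x)) \<le> sqrt (LINT x|M. (cmod (d k x))\<^sup>2)"
      by (rule integral_norm_le_sqrt_l2[OF d])
    also have "\<dots> \<le> sqrt ((1/4)^k)"
      using fast[of k] by (simp add: d_def)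
    also have "\<dots> = (1/2)^k"
      by (simp add: real_sqrt_power real_sqrt_divide)
    finally show ?thesis .
  qed
  then have "AE x in M. summable (\<lambda>k. d k x)"
    using d integrable_norm_sq_int[OF d] summable_geometric[of "1/2::real"]
    by (intro AE_summable_if_integral_norm_summable[where b="\<lambda>k. (1/2)^k"]) (auto simp: sq_int_def)
  then show ?thesis
  proof eventually_elim
    case (elim x)
    then have "convergent (\<lambda>n. s 0 x + (\<Sum>k<n. d k x))"
      by (intro convergent_add convergent_const) (simp add: summable_iff_convergent)
    moreover have "s 0 x + (\<Sum>k<n. d k x) = s n x" for n
      unfolding d_def using sum_lessThan_telescope[of "\<lambda>k. s k x" n] by simp
    ultimately show ?case by simp
  qed
qed

lemma l2_norm_AE_limit_le:
  assumes s: "\<And>j. sq_int M (s j)" and v: "sq_int M v" and [measurable]: "\<phi> \<in> borel_measurable M"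
    and lim: "AE x in M. (\<lambda>j. s j x) \<longlonglongrightarrow> \<phi> x"
    and bound: "\<And>j. K \<le> j \<Longrightarrow> (LINT x|M. (cmod (s j x - v x))\<^sup>2) \<le> B"
  shows "sq_int M (\<lambda>x. \<phi> x - v x)" and "(LINT x|M. (cmod (\<phi> x - v x))\<^sup>2) \<le> B"
proof -
  have [measurable]: "s j \<in> borel_measurable M" "v \<in> borel_measurable M" for j
    using s v by (auto simp: sq_int_def)
  have "0 \<le> (LINT x|M. (cmod (s K x - v x))\<^sup>2)"
    by simp
  with bound[of K] have B: "0 \<le> B"
    by linarith
  have "(\<integral>\<^sup>+ x. ennreal ((cmod (\<phi> x - v x))\<^sup>2) \<partial>M)
      = (\<integral>\<^sup>+ x. liminf (\<lambda>j. ennreal ((cmod (s j x - v x))\<^sup>2)) \<partial>M)"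
    using lim
  proof (intro nn_integral_cong_AE, eventually_elim)
    case (elim x)
    then have "(\<lambda>j. ennreal ((cmod (s j x - v x))\<^sup>2)) \<longlonglongrightarrow> ennreal ((cmod (\<phi> x - v x))\<^sup>2)"
      by (intro tendsto_intros)
    then show ?case by (intro lim_imp_Liminf[symmetric]) auto
  qed
  also have "\<dots> \<le> liminf (\<lambda>j. \<integral>\<^sup>+ x. ennreal ((cmod (s j x - v x))\<^sup>2) \<partial>M)"
    by (rule nn_integral_liminf) measurable
  also have "\<dots> \<le> ennreal B"
  proof -
    have "(\<integral>\<^sup>+ x. ennreal ((cmod (s j x - v x))\<^sup>2) \<partial>M) \<le> ennreal B" if "K \<le> j" for j
      using sq_int_diff[OF s v, of j] bound[OF that]
      by (simp add: sq_int_def nn_integral_eq_integral ennreal_leI)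
    then have "limsup (\<lambda>j. \<integral>\<^sup>+ x. ennreal ((cmod (s j x - v x))\<^sup>2) \<partial>M) \<le> ennreal B"
      by (intro Limsup_bounded) (auto simp: eventually_sequentially)
    then show ?thesis
      by (rule order.trans[OF Liminf_le_Limsup, rotated]) simp
  qed
  finally have nn: "(\<integral>\<^sup>+ x. ennreal ((cmod (\<phi> x - v x))\<^sup>2) \<partial>M) \<le> ennreal B" .
  have int: "integrable M (\<lambda>x. (cmod (\<phi> x - v x))\<^sup>2)"
    by (rule integrableI_bounded) (use nn in \<open>auto simp: top.not_eq_extremum intro: le_less_trans\<close>)
  then show "sq_int M (\<lambda>x. \<phi> x - v x)"
    by (simp add: sq_int_def)
  show "(LINT x|M. (cmod (\<phi> x - v x))\<^sup>2) \<le> B"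
    using nn nn_integral_eq_integral[OF int] B by (simp add: ennreal_le_iff)
qed

lemma (in prob_space) l2_fast_cauchy_limit:
  assumes s: "\<And>k. sq_int M (s k)"
    and fast: "\<And>j k. k \<le> j \<Longrightarrow> (LINT x|M. (cmod (s j x - s k x))\<^sup>2) \<le> (1/4)^k"
  obtains \<phi> where "sq_int M \<phi>" and "\<And>k. (LINT x|M. (cmod (\<phi> x - s k x))\<^sup>2) \<le> (1/4)^k"
proof
  define \<phi> where "\<phi> x = lim (\<lambda>k. s k x)" for x
  have [measurable]: "s k \<in> borel_measurable M" for k
    using s by (simp add: sq_int_def)
  have lim: "AE x in M. (\<lambda>k. s k x) \<longlonglongrightarrow> \<phi> x"
    using AE_convergent_fast_l2_cauchy[OF s fast[OF le_SucI[OF order_refl]]]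
    by eventually_elim (simp add: \<phi>_def convergent_LIMSEQ_iff)
  have "\<phi> \<in> borel_measurable M"
    unfolding \<phi>_def by measurable
  then have limit: "sq_int M (\<lambda>x. \<phi> x - s k x)" "(LINT x|M. (cmod (\<phi> x - s k x))\<^sup>2) \<le> (1/4)^k" for k
    using l2_norm_AE_limit_le[where v="s k" and K=k and B="(1/4)^k", OF s s _ lim fast] by auto
  then show "(LINT x|M. (cmod (\<phi> x - s k x))\<^sup>2) \<le> (1/4)^k" for k
    by blast
  show "sq_int M \<phi>"
    using sq_int_add[OF limit(1)[of 0] s[of 0]] by simp
qed

lemma has_sum_exhausting_sequence:
  fixes q :: "'i \<Rightarrow> 'a::{comm_monoid_add, metric_space}"
  assumes "(q has_sum Q) L" and "\<And>k. \<epsilon> k > 0"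
  obtains S where "\<And>k. finite (S k)" "\<And>k. S k \<subseteq> L" "incseq S" "\<And>k. dist (sum q (S k)) Q < \<epsilon> k"
proof -
  have "\<exists>T. finite T \<and> T \<subseteq> L \<and> (\<forall>Y. finite Y \<and> T \<subseteq> Y \<and> Y \<subseteq> L \<longrightarrow> dist (sum q Y) Q < \<epsilon> k)" for k
  proof -
    have "\<forall>\<^sub>F Y in finite_subsets_at_top L. dist (sum q Y) Q < \<epsilon> k"
      using assms unfolding has_sum_def tendsto_iff by blast
    then show ?thesis unfolding eventually_finite_subsets_at_top by blast
  qed
  then obtain T where T: "\<And>k. finite (T k)" "\<And>k. T k \<subseteq> L"
    "\<And>k Y. finite Y \<Longrightarrow> T k \<subseteq> Y \<Longrightarrow> Y \<subseteq> L \<Longrightarrow> dist (sum q Y) Q < \<epsilon> k"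
    by metis
  show ?thesis
  proof
    show "finite (\<Union>i\<le>k. T i)" "(\<Union>i\<le>k. T i) \<subseteq> L" for k
      using T(1,2) by auto
    show "incseq (\<lambda>k. \<Union>i\<le>k. T i)"
      by (rule monoI, rule UN_mono) auto
    show "dist (sum q (\<Union>i\<le>k. T i)) Q < \<epsilon> k" for k
      using T by (intro T(3)) auto
  qed
qed

lemma (in prob_space) l2_inner_tendsto:
  assumes \<phi>: "sq_int M \<phi>" and s: "\<And>k. sq_int M (s k)" and u: "sq_int M u" "\<And>x. cmod (u x) = 1"
    and lim: "(\<lambda>k. LINT x|M. (cmod (\<phi> x - s k x))\<^sup>2) \<longlonglongrightarrow> 0"
  shows "(\<lambda>k. l2_inner M (s k) u) \<longlonglongrightarrow> l2_inner M \<phi> u"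
proof -
  have "l2_inner M (\<lambda>x. (\<phi> x - s k x) + 1 * s k x) u
      = l2_inner M (\<lambda>x. \<phi> x - s k x) u + 1 * l2_inner M (s k) u" for k
    using sq_int_diff[OF \<phi> s] s u by (intro l2_inner_add_scaled) auto
  then have "l2_inner M (s k) u - l2_inner M \<phi> u = - l2_inner M (\<lambda>x. \<phi> x - s k x) u" for k
    by (simp add: algebra_simps)
  then have bound: "norm (l2_inner M (s k) u - l2_inner M \<phi> u) \<le> sqrt (LINT x|M. (cmod (\<phi> x - s k x))\<^sup>2)" for k
    using l2_inner_unimodular_le[of "\<lambda>x. \<phi> x - s k x" u] sq_int_diff[OF \<phi> s] u(2) by simp
  have "(\<lambda>k. sqrt (LINT x|M. (cmod (\<phi> x - s k x))\<^sup>2)) \<longlonglongrightarrow> 0"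
    using tendsto_real_sqrt[OF lim] by simp
  then have "(\<lambda>k. l2_inner M (s k) u - l2_inner M \<phi> u) \<longlonglongrightarrow> 0"
    by (rule Lim_null_comparison[OF always_eventually, rotated]) (use bound in blast)
  then show ?thesis
    by (simp add: Lim_null[symmetric])
qed

locale l2_orthonormal_basis = l2_orthonormal + prob_space M +
  assumes basis_unimodular: "\<And>l x. l \<in> L \<Longrightarrow> cmod (e l x) = 1"
    and l2_basis_complete: "\<And>f. sq_int M f \<Longrightarrow> (\<forall>l\<in>L. l2_inner M f (e l) = 0) \<Longrightarrow> (AE x in M. f x = 0)"
begin

lemma AE_eq_l2_limit_of_coefficients:
  assumes f: "sq_int M f" and \<phi>: "sq_int M \<phi>" and s: "\<And>k. sq_int M (s k)"
    and lim: "(\<lambda>k. LINT x|M. (cmod (\<phi> x - s k x))\<^sup>2) \<longlonglongrightarrow> 0"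
    and coef: "\<And>m. m \<in> L \<Longrightarrow> (\<lambda>k. l2_inner M (s k) (e m)) \<longlonglongrightarrow> l2_inner M f (e m)"
  shows "AE x in M. f x = \<phi> x"
proof -
  have "l2_inner M (\<lambda>x. f x - \<phi> x) (e m) = 0" if m: "m \<in> L" for m
  proof -
    have "l2_inner M \<phi> (e m) = l2_inner M f (e m)"
      using l2_inner_tendsto[OF \<phi> s sq_int_basis[OF m] basis_unimodular[OF m] lim] coef[OF m]
      by (rule LIMSEQ_unique)
    then show ?thesis
      using l2_inner_add_scaled[OF f \<phi> sq_int_basis[OF m], of "-1"] by simp
  qed
  then have "AE x in M. f x - \<phi> x = 0"
    using sq_int_diff[OF f \<phi>] by (intro l2_basis_complete) auto
  then show ?thesis
    by eventually_elim simp
qed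

lemma bessel_inequality:
  assumes "sq_int M f" "finite A" "A \<subseteq> L"
  shows "(\<Sum>l\<in>A. (cmod (l2_inner M f (e l)))\<^sup>2) \<le> (LINT x|M. (cmod (f x))\<^sup>2)"
proof -
  have "0 \<le> (LINT x|M. (cmod (f x - (\<Sum>l\<in>A. l2_inner M f (e l) * e l x)))\<^sup>2)"
    by simp
  then show ?thesis
    using l2_norm_fourier_remainder[OF assms] by simp
qed

context
  fixes f and S :: "nat \<Rightarrow> _" and Q :: real
  assumes f: "sq_int M f" and S: "\<And>k. finite (S k)" "\<And>k. S k \<subseteq> L" "incseq S"
    and Q: "((\<lambda>l. (cmod (l2_inner M f (e l)))\<^sup>2) has_sum Q) L"
    and tail: "\<And>k. dist (\<Sum>l\<in>S k. (cmod (l2_inner M f (e l)))\<^sup>2) Q < (1/4)^k"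
begin

text \<open>\<open>L\<close> may be uncountable, so the Fourier series of \<open>f\<close> is summed along finite sets
  \<open>S k\<close> that exhaust \<open>Q\<close> up to \<open>(1/4)^k\<close>; this rate makes the partial sums a fast
  Cauchy sequence.\<close>

lemma sum_le_has_sum_fourier: "finite A \<Longrightarrow> A \<subseteq> L \<Longrightarrow> (\<Sum>l\<in>A. (cmod (l2_inner M f (e l)))\<^sup>2) \<le> Q"
  by (rule finite_sum_le_has_sum[OF Q]) auto

lemma fourier_partial_sums_fast_cauchy:
  assumes "k \<le> j"
  shows "(LINT x|M. (cmod ((\<Sum>l\<in>S j. l2_inner M f (e l) * e l x) - (\<Sum>l\<in>S k. l2_inner M f (e l) * e l x)))\<^sup>2)
         \<le> (1/4)^k"
proof -
  let ?c = "\<lambda>l. l2_inner M f (e l)"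
  have sub: "S k \<subseteq> S j"
    using S(3) assms by (simp add: incseq_def)
  then have "(\<Sum>l\<in>S j. ?c l * e l x) - (\<Sum>l\<in>S k. ?c l * e l x) = (\<Sum>l\<in>S j - S k. ?c l * e l x)" for x
    using S(1) by (simp add: sum_diff)
  then have "(LINT x|M. (cmod ((\<Sum>l\<in>S j. ?c l * e l x) - (\<Sum>l\<in>S k. ?c l * e l x)))\<^sup>2)
           = (\<Sum>l\<in>S j - S k. (cmod (?c l))\<^sup>2)"
    using l2_norm_finite_sum_basis[of "S j - S k" ?c] S(1,2) by auto
  also have "\<dots> = (\<Sum>l\<in>S j. (cmod (?c l))\<^sup>2) - (\<Sum>l\<in>S k. (cmod (?c l))\<^sup>2)"
    using sub S(1) by (simp add: sum_diff)
  also have "\<dots> < (1/4)^k"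
    using tail[of k] sum_le_has_sum_fourier[OF S(1,2), of j] by (simp add: dist_real_def)
  finally show ?thesis by simp
qed

lemma fourier_partial_sums_coefficient:
  assumes m: "m \<in> L"
  shows "\<forall>\<^sub>F k in sequentially.
           l2_inner M (\<lambda>x. \<Sum>l\<in>S k. l2_inner M f (e l) * e l x) (e m) = l2_inner M f (e m)"
proof (cases "\<exists>K. m \<in> S K")
  case True
  then obtain K where "m \<in> S K" by blast
  then have "m \<in> S k" if "K \<le> k" for k
    using S(3) that by (auto simp: incseq_def)
  then show ?thesis
    using S l2_inner_finite_sum_basis[OF _ _ m] unfolding eventually_sequentially by auto
next
  case False
  have "(cmod (l2_inner M f (e m)))\<^sup>2 \<le> (1/4)^k" for k
  proof -
    have "(cmod (l2_inner M f (e m)))\<^sup>2 + (\<Sum>l\<in>S k. (cmod (l2_inner M f (e l)))\<^sup>2) \<le> Q"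
      using sum_le_has_sum_fourier[of "insert m (S k)"] S m False by auto
    then show ?thesis
      using tail[of k] by (simp add: dist_real_def)
  qed
  then have "(cmod (l2_inner M f (e m)))\<^sup>2 \<le> 0"
    by (intro tendsto_lowerbound[OF LIMSEQ_power_zero]) (auto intro!: always_eventually)
  then show ?thesis
    using False S l2_inner_finite_sum_basis[OF _ _ m] by simp
qed

lemma fourier_partial_sums_l2_tendsto:
  "(\<lambda>k. LINT x|M. (cmod (f x - (\<Sum>l\<in>S k. l2_inner M f (e l) * e l x)))\<^sup>2) \<longlonglongrightarrow> 0"
proof -
  define s where "s = (\<lambda>k x. \<Sum>l\<in>S k. l2_inner M f (e l) * e l x)"
  have s: "sq_int M (s k)" for k
    unfolding s_def by (rule sq_int_finite_sum_basis[OF S(2)])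
  have fast: "(LINT x|M. (cmod (s j x - s k x))\<^sup>2) \<le> (1/4)^k" if "k \<le> j" for j k
    unfolding s_def using that by (rule fourier_partial_sums_fast_cauchy)
  obtain \<phi> where \<phi>: "sq_int M \<phi>" and \<phi>_fast: "\<And>k. (LINT x|M. (cmod (\<phi> x - s k x))\<^sup>2) \<le> (1/4)^k"
    using l2_fast_cauchy_limit[OF s fast] by blast
  have "(\<lambda>k. (1/4::real)^k) \<longlonglongrightarrow> 0"
    by (rule LIMSEQ_power_zero) simp
  then have \<phi>_lim: "(\<lambda>k. LINT x|M. (cmod (\<phi> x - s k x))\<^sup>2) \<longlonglongrightarrow> 0"
    by (rule Lim_null_comparison[OF always_eventually, rotated]) (use \<phi>_fast in simp)
  have "(\<lambda>k. l2_inner M (s k) (e m)) \<longlonglongrightarrow> l2_inner M f (e m)" if "m \<in> L" for m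
    unfolding s_def using that by (intro tendsto_eventually fourier_partial_sums_coefficient)
  then have "AE x in M. f x = \<phi> x"
    by (rule AE_eq_l2_limit_of_coefficients[OF f \<phi> s \<phi>_lim])
  moreover have [measurable]: "f \<in> borel_measurable M" "\<phi> \<in> borel_measurable M" "s k \<in> borel_measurable M" for k
    using f \<phi> s by (auto simp: sq_int_def)
  ultimately have "(LINT x|M. (cmod (f x - s k x))\<^sup>2) = (LINT x|M. (cmod (\<phi> x - s k x))\<^sup>2)" for k
  proof (intro integral_cong_AE)
    show "AE x in M. (cmod (f x - s k x))\<^sup>2 = (cmod (\<phi> x - s k x))\<^sup>2"
      using \<open>AE x in M. f x = \<phi> x\<close> by eventually_elim simp
  qed measurable
  with \<phi>_lim show ?thesis
    by (simp add: s_def)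
qed

end

theorem parseval:
  assumes f: "sq_int M f"
  shows "((\<lambda>l. (cmod (l2_inner M f (e l)))\<^sup>2) has_sum (LINT x|M. (cmod (f x))\<^sup>2)) L"
proof -
  let ?q = "\<lambda>l. (cmod (l2_inner M f (e l)))\<^sup>2"
  have "?q summable_on L"
    using bessel_inequality[OF f] by (intro nonneg_bdd_above_summable_on) (auto simp: bdd_above_def)
  then obtain Q where Q: "(?q has_sum Q) L"
    by (auto simp: summable_on_def)
  then obtain S where S: "\<And>k. finite (S k)" "\<And>k. S k \<subseteq> L" "incseq S"
    and tail: "\<And>k. dist (sum ?q (S k)) Q < (1/4)^k"
    using has_sum_exhausting_sequence[OF Q, of "\<lambda>k. (1/4)^k"] by auto
  have "(\<lambda>k. (LINT x|M. (cmod (f x))\<^sup>2) - sum ?q (S k)) \<longlonglongrightarrow> 0"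
    using fourier_partial_sums_l2_tendsto[OF f S Q tail] l2_norm_fourier_remainder[OF f S(1,2)] by simp
  moreover have "(\<lambda>k. (1/4::real)^k) \<longlonglongrightarrow> 0"
    by (rule LIMSEQ_power_zero) simp
  then have "(\<lambda>k. dist (sum ?q (S k)) Q) \<longlonglongrightarrow> 0"
    by (rule Lim_null_comparison[OF always_eventually, rotated]) (use tail in \<open>simp add: less_imp_le\<close>)
  then have "(\<lambda>k. sum ?q (S k)) \<longlonglongrightarrow> Q"
    by (rule tendsto_dist_iff[THEN iffD2])
  then have "(\<lambda>k. (LINT x|M. (cmod (f x))\<^sup>2) - sum ?q (S k)) \<longlonglongrightarrow> (LINT x|M. (cmod (f x))\<^sup>2) - Q"
    by (intro tendsto_intros)
  ultimately have "(LINT x|M. (cmod (f x))\<^sup>2) = Q"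
    using LIMSEQ_unique by fastforce
  with Q show ?thesis
    by simp
qed

theorem l2_has_sum_fourier:
  assumes f: "sq_int M f"
  shows "l2_has_sum M (\<lambda>l x. l2_inner M f (e l) * e l x) L f"
proof -
  have "((\<lambda>A. (LINT x|M. (cmod (f x))\<^sup>2) - (\<Sum>l\<in>A. (cmod (l2_inner M f (e l)))\<^sup>2)) \<longlongrightarrow> 0)
          (finite_subsets_at_top L)"
    using tendsto_diff[OF tendsto_const parseval[OF f, unfolded has_sum_def],
        of "LINT x|M. (cmod (f x))\<^sup>2"] by simp
  moreover have "\<forall>\<^sub>F A in finite_subsets_at_top L.
      (LINT x|M. (cmod (f x))\<^sup>2) - (\<Sum>l\<in>A. (cmod (l2_inner M f (e l)))\<^sup>2)
    = (LINT x|M. (cmod (f x - (\<Sum>l\<in>A. l2_inner M f (e l) * e l x)))\<^sup>2)"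
    by (intro eventually_finite_subsets_at_top_weakI) (simp add: l2_norm_fourier_remainder[OF f])
  ultimately show ?thesis
    unfolding l2_has_sum_def by (rule Lim_transform_eventually)
qed

end

section \<open>Translations on the Bohr compactification\<close>

lemma expo_commute: "expo l x = expo x l"
  by (simp add: expo_def inner_commute)

lemma norm_expo [simp]: "cmod (expo l x) = 1"
  unfolding expo_def by (simp add: norm_exp_eq_Re)

lemma expo_add: "expo a (x + y) = expo a x * expo a y"
  unfolding expo_def by (simp add: inner_add_right distrib_left exp_add)

lemma sq_int_expo:
  assumes "prob_space \<mu>" "sets \<mu> = sets borel"
  shows "sq_int \<mu> (expo l)"
proof -
  interpret prob_space \<mu> by fact
  have "expo l \<in> borel_measurable borel"
    unfolding expo_def by (intro borel_measurable_continuous_onI continuous_intros)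
  then have "expo l \<in> borel_measurable \<mu>"
    by (subst measurable_cong_sets[OF assms(2) refl])
  then show ?thesis
    by (simp add: sq_int_def)
qed

lemma expo_in_bohr_group: "expo a \<in> bohr_group"
  unfolding bohr_group_def by (simp add: expo_add)

lemma bohr_act_measurable:
  assumes "bohr_haar M"
  shows "bohr_act a \<in> M \<rightarrow>\<^sub>M M"
proof (rule measurableI)
  have "space M = bohr_group"
    using assms by (simp add: bohr_haar_def)
  then show "bohr_act a h \<in> space M" if "h \<in> space M" for h
    using that unfolding bohr_group_def bohr_act_def by (simp add: norm_mult expo_add)
  show "bohr_act a -` A \<inter> space M \<in> sets M" if "A \<in> sets M" for A
    using assms expo_in_bohr_group[of a] that
    unfolding bohr_haar_def bohr_act_def[abs_def] by auto
qed

lemma distr_bohr_act: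
  assumes "bohr_haar M"
  shows "distr M M (bohr_act a) = M"
proof (rule measure_eqI)
  fix A assume "A \<in> sets (distr M M (bohr_act a))"
  then have A: "A \<in> sets M" by simp
  have "emeasure (distr M M (bohr_act a)) A = emeasure M (bohr_act a -` A \<inter> space M)"
    by (rule emeasure_distr[OF bohr_act_measurable[OF assms] A])
  also have "\<dots> = emeasure M A"
    using assms expo_in_bohr_group[of a] A
    unfolding bohr_haar_def bohr_act_def[abs_def] by auto
  finally show "emeasure (distr M M (bohr_act a)) A = emeasure M A" .
qed simp

lemma AE_bohr_act:
  assumes "bohr_haar M" and "AE h in M. P h"
  shows "AE h in M. P (bohr_act a h)"
proof -
  have "AE h in distr M M (bohr_act a). P h"
    unfolding distr_bohr_act[OF assms(1)] by (rule assms(2))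
  then show ?thesis
    by (rule AE_distrD[OF bohr_act_measurable[OF assms(1)]])
qed

lemma sq_int_bohr_act:
  assumes "bohr_haar M" and u: "sq_int M u"
  shows "sq_int M (\<lambda>h. u (bohr_act a h))"
    and "(LINT h|M. (cmod (u (bohr_act a h)))\<^sup>2) = (LINT h|M. (cmod (u h))\<^sup>2)"
proof -
  note act = bohr_act_measurable[OF assms(1)]
  have um: "u \<in> borel_measurable M"
    using u by (simp add: sq_int_def)
  have "integrable M (\<lambda>h. (cmod (u (bohr_act a h)))\<^sup>2)"
    using u um integrable_distr_eq[OF act, of "\<lambda>h. (cmod (u h))\<^sup>2"]
    by (simp add: sq_int_def distr_bohr_act[OF assms(1)])
  then show "sq_int M (\<lambda>h. u (bohr_act a h))"
    using measurable_compose[OF act um] by (simp add: sq_int_def)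
  show "(LINT h|M. (cmod (u (bohr_act a h)))\<^sup>2) = (LINT h|M. (cmod (u h))\<^sup>2)"
    using integral_distr[OF act, of "\<lambda>h. (cmod (u h))\<^sup>2"] um by (simp add: distr_bohr_act[OF assms(1)])
qed

locale l2_isometry =
  fixes \<mu> :: "'a measure" and M :: "'b measure" and W :: "('a \<Rightarrow> complex) \<Rightarrow> 'b \<Rightarrow> complex"
  assumes sq_int_W: "\<And>f. sq_int \<mu> f \<Longrightarrow> sq_int M (W f)"
    and W_add_scaled: "\<And>f g c. sq_int \<mu> f \<Longrightarrow> sq_int \<mu> g
                 \<Longrightarrow> (AE h in M. W (\<lambda>x. f x + c * g x) h = W f h + c * W g h)"
    and l2_norm_W: "\<And>f. sq_int \<mu> f \<Longrightarrow> (LINT h|M. (cmod (W f h))\<^sup>2) = (LINT x|\<mu>. (cmod (f x))\<^sup>2)"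
begin

lemma W_zero: "AE h in M. W (\<lambda>x. 0) h = 0"
  using sq_int_W[OF sq_int_zero] l2_norm_W[OF sq_int_zero] by (intro AE_zero_if_l2_norm_zero) auto

lemma W_diff_add:
  assumes "sq_int \<mu> u" "sq_int \<mu> v"
  shows "AE h in M. W u h = W (\<lambda>x. u x - v x) h + W v h"
  using W_add_scaled[OF sq_int_diff[OF assms] assms(2), of 1] by simp

lemma W_finite_sum:
  assumes "finite A" and "\<And>l. l \<in> A \<Longrightarrow> sq_int \<mu> (e l)" and "\<And>l. l \<in> A \<Longrightarrow> AE h in M. W (e l) h = E l h"
  shows "AE h in M. W (\<lambda>x. \<Sum>l\<in>A. d l * e l x) h = (\<Sum>l\<in>A. d l * E l h)"
  using assms
proof (induction A rule: finite_induct)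
  case empty
  then show ?case using W_zero by simp
next
  case (insert i A)
  have "AE h in M. W (\<lambda>x. (\<Sum>l\<in>A. d l * e l x) + d i * e i x) h
                 = W (\<lambda>x. \<Sum>l\<in>A. d l * e l x) h + d i * W (e i) h"
    using insert.prems by (intro W_add_scaled sq_int_sum) auto
  moreover have "AE h in M. W (\<lambda>x. \<Sum>l\<in>A. d l * e l x) h = (\<Sum>l\<in>A. d l * E l h)"
    using insert by auto
  moreover have "AE h in M. W (e i) h = E i h"
    using insert.prems by auto
  ultimately show ?case
    by eventually_elim (use insert.hyps in \<open>simp add: add.commute\<close>)
qed

end

lemma spectral_orthonormal_basis:
  assumes prob: "prob_space \<mu>" and borel: "sets \<mu> = sets borel" and spec: "spectral \<mu> \<Lambda>"
  shows "l2_orthonormal_basis \<mu> expo \<Lambda>"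
proof -
  have "l2_orthonormal \<mu> expo \<Lambda>"
    using spec sq_int_expo[OF prob borel] by unfold_locales (auto simp: spectral_def)
  moreover have "l2_orthonormal_basis_axioms \<mu> expo \<Lambda>"
    using spec by unfold_locales (auto simp: spectral_def)
  ultimately show ?thesis
    using prob by (simp add: l2_orthonormal_basis_def)
qed

locale bohr_isometry = l2_isometry \<mu> M W
  for \<mu> :: "(real^'n) measure" and M :: "(real^'n \<Rightarrow> complex) measure" and W +
  fixes \<Lambda> :: "(real^'n) set"
  assumes prob: "prob_space \<mu>" and borel: "sets \<mu> = sets borel" and haar: "bohr_haar M"
    and W_expo: "\<And>l. l \<in> \<Lambda> \<Longrightarrow> AE h in M. W (expo l) h = h l"
begin

lemma W_translate_finite_sum:
  assumes "finite S" "S \<subseteq> \<Lambda>"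
  shows "AE h in M. W (\<lambda>x. \<Sum>l\<in>S. c l * expo l x) (bohr_act a h)
                  = W (\<lambda>x. \<Sum>l\<in>S. expo l a * c l * expo l x) h"
proof -
  have W_sum: "AE h in M. W (\<lambda>x. \<Sum>l\<in>S. d l * expo l x) h = (\<Sum>l\<in>S. d l * h l)" for d
    using assms sq_int_expo[OF prob borel] W_expo by (intro W_finite_sum) auto
  have "AE h in M. W (\<lambda>x. \<Sum>l\<in>S. c l * expo l x) (bohr_act a h) = (\<Sum>l\<in>S. c l * bohr_act a h l)"
    by (rule AE_bohr_act[OF haar W_sum])
  with W_sum[of "\<lambda>l. expo l a * c l"] show ?thesis
    by eventually_elim (simp add: bohr_act_def expo_commute[of a] ac_simps)
qed

lemma translation_defect_le:
  fixes c :: "real^'n \<Rightarrow> complex" and a :: "real^'n"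
  assumes f: "sq_int \<mu> f" and g: "sq_int \<mu> g" and S: "finite S" "S \<subseteq> \<Lambda>"
  defines "fS \<equiv> \<lambda>x. \<Sum>l\<in>S. c l * expo l x"
    and "gS \<equiv> \<lambda>x. \<Sum>l\<in>S. expo l a * c l * expo l x"
  shows "(LINT h|M. (cmod (W f (bohr_act a h) - W g h))\<^sup>2)
       \<le> 2 * (LINT x|\<mu>. (cmod (f x - fS x))\<^sup>2) + 2 * (LINT x|\<mu>. (cmod (g x - gS x))\<^sup>2)"
proof -
  have fS: "sq_int \<mu> fS" and gS: "sq_int \<mu> gS"
    unfolding fS_def gS_def using sq_int_expo[OF prob borel] by (auto intro!: sq_int_sum)
  define X where "X = W (\<lambda>x. f x - fS x)"
  define Y where "Y = W (\<lambda>x. g x - gS x)"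
  have X: "sq_int M X" and Y: "sq_int M Y"
    unfolding X_def Y_def using sq_int_diff f g fS gS by (auto intro!: sq_int_W)
  have Xa: "sq_int M (\<lambda>h. X (bohr_act a h))"
    by (rule sq_int_bohr_act(1)[OF haar X])
  have D: "sq_int M (\<lambda>h. W f (bohr_act a h) - W g h)"
    using sq_int_bohr_act(1)[OF haar sq_int_W[OF f]] sq_int_W[OF g] by (rule sq_int_diff)
  have "AE h in M. W f (bohr_act a h) - W g h = X (bohr_act a h) - Y h"
    using AE_bohr_act[OF haar W_diff_add[OF f fS], where a=a] W_diff_add[OF g gS] W_translate_finite_sum[OF S, of c a]
    by eventually_elim (simp add: X_def Y_def fS_def gS_def)
  then have "(LINT h|M. (cmod (W f (bohr_act a h) - W g h))\<^sup>2) = (LINT h|M. (cmod (X (bohr_act a h) - Y h))\<^sup>2)"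
    using D sq_int_diff[OF Xa Y] by (intro integral_cong_AE) (auto simp: sq_int_def)
  also have "\<dots> \<le> 2 * (LINT h|M. (cmod (X (bohr_act a h)))\<^sup>2) + 2 * (LINT h|M. (cmod (Y h))\<^sup>2)"
    by (rule l2_norm_diff_le[OF Xa Y])
  also have "\<dots> = 2 * (LINT x|\<mu>. (cmod (f x - fS x))\<^sup>2) + 2 * (LINT x|\<mu>. (cmod (g x - gS x))\<^sup>2)"
    unfolding sq_int_bohr_act(2)[OF haar X]
    using l2_norm_W[OF sq_int_diff[OF f fS]] l2_norm_W[OF sq_int_diff[OF g gS]] by (simp add: X_def Y_def)
  finally show ?thesis .
qed

lemma W_bohr_act_eq:
  assumes f: "sq_int \<mu> f" and g: "sq_int \<mu> g"
    and f_exp: "l2_has_sum \<mu> (\<lambda>l x. c l * expo l x) \<Lambda> f"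
    and g_exp: "l2_has_sum \<mu> (\<lambda>l x. expo l a * c l * expo l x) \<Lambda> g"
  shows "AE h in M. W f (bohr_act a h) = W g h"
proof -
  let ?D = "\<lambda>h. W f (bohr_act a h) - W g h"
  let ?bound = "\<lambda>S. 2 * (LINT x|\<mu>. (cmod (f x - (\<Sum>l\<in>S. c l * expo l x)))\<^sup>2)
                 + 2 * (LINT x|\<mu>. (cmod (g x - (\<Sum>l\<in>S. expo l a * c l * expo l x)))\<^sup>2)"
  have "(?bound \<longlongrightarrow> 2 * 0 + 2 * 0) (finite_subsets_at_top \<Lambda>)"
    using f_exp g_exp unfolding l2_has_sum_def by (intro tendsto_intros)
  moreover have "\<forall>\<^sub>F S in finite_subsets_at_top \<Lambda>. (LINT h|M. (cmod (?D h))\<^sup>2) \<le> ?bound S"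
    by (rule eventually_finite_subsets_at_top_weakI) (rule translation_defect_le[OF f g])
  ultimately have "(LINT h|M. (cmod (?D h))\<^sup>2) \<le> 0"
    using tendsto_le[OF finite_subsets_at_top_neq_bot _ tendsto_const] by fastforce
  then have "(LINT h|M. (cmod (?D h))\<^sup>2) = 0"
    by (intro order.antisym) simp_all
  moreover have "sq_int M ?D"
    using sq_int_bohr_act(1)[OF haar sq_int_W[OF f]] sq_int_W[OF g] by (rule sq_int_diff)
  ultimately have "AE h in M. ?D h = 0"
    by (intro AE_zero_if_l2_norm_zero)
  then show ?thesis
    by eventually_elim simp
qed

end

theorem theorem4p11:
  fixes \<mu> :: "(real^'n) measure" and \<Lambda> :: "(real^'n) set"
    and M :: "(real^'n \<Rightarrow> complex) measure"
    and W :: "(real^'n \<Rightarrow> complex) \<Rightarrow> (real^'n \<Rightarrow> complex) \<Rightarrow> complex"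
  assumes prob: "prob_space \<mu>" and borel: "sets \<mu> = sets borel"
    and spec: "spectral \<mu> \<Lambda>"
    and haar: "bohr_haar M"
    and W_L2: "\<And>f. sq_int \<mu> f \<Longrightarrow> sq_int M (W f)"
    and W_wd: "\<And>f g. sq_int \<mu> f \<Longrightarrow> sq_int \<mu> g \<Longrightarrow> (AE x in \<mu>. f x = g x)
                 \<Longrightarrow> (AE h in M. W f h = W g h)"
    and W_lin: "\<And>f g c. sq_int \<mu> f \<Longrightarrow> sq_int \<mu> g
                 \<Longrightarrow> (AE h in M. W (\<lambda>x. f x + c * g x) h = W f h + c * W g h)"
    and W_isom: "\<And>f. sq_int \<mu> f \<Longrightarrow>
                 (LINT h|M. (cmod (W f h))^2) = (LINT x|\<mu>. (cmod (f x))^2)"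
    and W_exp: "\<And>l. l \<in> \<Lambda> \<Longrightarrow> (AE h in M. W (expo l) h = h l)"
  shows "\<forall>a f g. sq_int \<mu> f \<and> sq_int \<mu> g \<and> local_transl \<mu> \<Lambda> a f g \<longrightarrow>
           (AE h in M. W f (bohr_act a h) = W g h)"
proof (intro allI impI, elim conjE)
  fix a f g
  assume f: "sq_int \<mu> f" and g: "sq_int \<mu> g" and lt: "local_transl \<mu> \<Lambda> a f g"
  interpret bohr_isometry \<mu> M W \<Lambda>
    using W_L2 W_lin W_isom prob borel haar W_exp
    unfolding bohr_isometry_def bohr_isometry_axioms_def l2_isometry_def by blast
  interpret basis: l2_orthonormal_basis \<mu> expo \<Lambda>
    by (rule spectral_orthonormal_basis[OF prob borel spec])
  show "AE h in M. W f (bohr_act a h) = W g h"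
    using f g basis.l2_has_sum_fourier[OF f] lt[unfolded local_transl_def]
    by (rule W_bohr_act_eq)
qed

end
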